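(* Fix an integer $m\ge 1$, let $\xi=(\xi_1\ge\cdots\ge\xi_\ell>0)$ be a partition with $\xi_i\le m$ for all $i$, and let $\mu\in\mathbb Z_{\ge 0}$. Write $\mu=\mu_1 m+\mu_0$ with $0\le\mu_0<m$, and consider the formal power series \[ F(x)=F_{\xi,m,\mu}(x)=\frac{p_{m-\mu_0-1}(x)\,p_\xi(x)}{p_m(x)^{\mu_1+1}}=\sum_{r\ge 0}a_r x^r . \] Let $t:=\#\{i:\xi_i=m\}$. Then: (1) If $m=1$, then $F_{\xi,1,\mu}(x)=1$. (2) Assume $m\ge 2$. (a) If $t\ge \mu_1+1$, then $F_{\xi,m,\mu}(x)$ is a polynomial; in particular $a_r=0$ for all sufficiently large $r$. (b) If $t\le \mu_1$, then $a_r>0$ for all sufficiently large $r$.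
   Context: The polynomials $p_r(x)\in\mathbb Z[x]$ are defined by $p_0(x)=p_1(x)=1$ and $p_{r+1}(x)=p_r(x)-x\,p_{r-1}(x)$ for $r\ge 1$. For a partition $\xi=(\xi_1,\dots,\xi_\ell)$, $p_\xi(x):=\prod_{i=1}^\ell p_{\xi_i}(x)$. Since $p_m(0)=1$, the quotient is a well-defined formal power series in $x$. *)

theory Defs
  imports "HOL-Computational_Algebra.Computational_Algebra"
begin

fun pp :: "nat \<Rightarrow> int poly" where
  "pp 0 = 1"
| "pp (Suc 0) = 1"
| "pp (Suc (Suc r)) = pp (Suc r) - [:0, 1:] * pp r"

definition pxi :: "nat list \<Rightarrow> int poly" where
  "pxi xi = prod_list (map pp xi)"

text \<open>The formal power series F_{xi,m,mu}, computed in Q[[x]] (denominator has constant term 1).\<close>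
definition Fser :: "nat list \<Rightarrow> nat \<Rightarrow> nat \<Rightarrow> rat fps" where
  "Fser xi m mu =
     fps_of_poly (map_poly of_int (pp (m - mu mod m - 1) * pxi xi))
     / fps_of_poly (map_poly of_int (pp m ^ (mu div m + 1)))"

end

theory Submission
  imports Defs "HOL-Analysis.Analysis"
begin

text \<open>
  Substituting \<open>x = 1 / (4 cos\<^sup>2 t)\<close> turns the recurrence of \<open>p\<^sub>r\<close> into that of
  \<open>sin ((r + 1) t)\<close>: \<open>p\<^sub>r(x) (2 cos t)\<^sup>r sin t = sin ((r + 1) t)\<close>. Hence \<open>p\<^sub>m\<close>
  vanishes at the \<open>\<lfloor>m/2\<rfloor>\<close> distinct positive points
  \<open>x\<^sub>j = 1 / (4 cos\<^sup>2 (j \<pi> / (m + 1)))\<close> and, having degree at most \<open>m/2\<close> and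
  constant term 1, equals \<open>\<Prod>\<^sub>j (1 - x / x\<^sub>j)\<close>.

  The \<open>t\<close> factors \<open>p\<^sub>m\<close> of \<open>p\<^sub>\<xi>\<close> cancel against the denominator \<open>p\<^sub>m\<^bsup>\<mu>\<^sub>1+1\<^esup>\<close>. If \<open>t > \<mu>\<^sub>1\<close> the denominator disappears and
  \<open>F\<close> is a polynomial. Otherwise \<open>F = N / p\<^sub>m\<^sup>k\<close> with \<open>k \<ge> 1\<close>, where \<open>N\<close> is a
  product of \<open>p\<^sub>j\<close> with \<open>j < m\<close>, all positive at the smallest root \<open>\<rho> = x\<^sub>1\<close>. So
  \<open>F = g / (1 - x/\<rho>)\<^sup>k\<close> where \<open>g\<close> converges beyond \<open>\<rho>\<close> with \<open>g(\<rho>) > 0\<close>, and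
  the coefficients of such a series are eventually positive.
\<close>

lemma map_poly_of_int_diff:
  "map_poly (of_int :: int \<Rightarrow> 'a::comm_ring_1) (p - q) = map_poly of_int p - map_poly of_int q"
  by (rule poly_eqI) (simp add: coeff_map_poly)

lemma map_poly_of_int_mult:
  "map_poly (of_int :: int \<Rightarrow> 'a::comm_ring_1) (p * q) = map_poly of_int p * map_poly of_int q"
  by (rule poly_eqI) (simp add: coeff_map_poly coeff_mult)

lemma map_poly_of_int_power:
  "map_poly (of_int :: int \<Rightarrow> 'a::comm_ring_1) (p ^ n) = map_poly of_int p ^ n"
  by (induction n) (simp_all add: map_poly_of_int_mult)

lemma poly_pp_0 [simp]: "poly (pp r) 0 = 1"
  by (induction r rule: pp.induct) auto

lemma degree_pp: "degree (pp r) \<le> r div 2"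
proof (induction r rule: pp.induct)
  case (3 r)
  have "degree ([:0, 1:] * pp r) \<le> Suc (r div 2)"
    using 3(2) degree_mult_le[of "[:0, 1:]" "pp r"] by simp
  then show ?case
    using 3(1) degree_diff_le[of "pp (Suc r)" _ "[:0, 1:] * pp r"] by simp
qed auto

lemma poly_of_int_pp_Suc_Suc:
  "poly (map_poly of_int (pp (Suc (Suc r)))) x
     = poly (map_poly of_int (pp (Suc r))) x - x * poly (map_poly of_int (pp r)) (x :: 'a::comm_ring_1)"
proof -
  have "map_poly (of_int :: int \<Rightarrow> 'a) [:0, 1:] = [:0, 1:]"
    by (rule poly_eqI) (simp add: coeff_map_poly coeff_pCons split: nat.split)
  then show ?thesis
    by (simp only: pp.simps map_poly_of_int_diff map_poly_of_int_mult poly_diff poly_mult) simp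
qed

lemma poly_pp_cos:
  fixes t :: real
  assumes "cos t \<noteq> 0"
  shows "poly (map_poly of_int (pp r)) (1 / (4 * (cos t)\<^sup>2)) * (2 * cos t) ^ r * sin t
           = sin (real (Suc r) * t)"
proof (induction r rule: pp.induct)
  case 2
  show ?case by (simp add: sin_double)
next
  case (3 r)
  define x where "x = 1 / (4 * (cos t)\<^sup>2)"
  have x: "x * (2 * cos t)\<^sup>2 = 1"
    using assms by (simp add: x_def field_simps power2_eq_square)
  have sin_rec: "sin (real (Suc (Suc (Suc r))) * t)
      = 2 * cos t * sin (real (Suc (Suc r)) * t) - sin (real (Suc r) * t)"
    using sin_add[of "real (Suc (Suc r)) * t" t] sin_diff[of "real (Suc (Suc r)) * t" t]
    by (simp add: algebra_simps)
  have "poly (map_poly of_int (pp (Suc (Suc r)))) x * (2 * cos t) ^ Suc (Suc r) * sin t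
      = 2 * cos t * (poly (map_poly of_int (pp (Suc r))) x * (2 * cos t) ^ Suc r * sin t)
        - (x * (2 * cos t)\<^sup>2) * (poly (map_poly of_int (pp r)) x * (2 * cos t) ^ r * sin t)"
    unfolding poly_of_int_pp_Suc_Suc power_Suc power2_eq_square by algebra
  also have "\<dots> = sin (real (Suc (Suc (Suc r))) * t)"
    unfolding x mult_1_left unfolding x_def 3 sin_rec ..
  finally show ?case
    unfolding x_def .
qed simp

definition pp_root :: "nat \<Rightarrow> nat \<Rightarrow> real" where
  "pp_root m j = 1 / (4 * (cos (real j * pi / real (m + 1)))\<^sup>2)"

lemma root_angle_bounds:
  assumes "1 \<le> j" "2 * j \<le> m"
  shows "0 < real j * pi / real (m + 1)" "real j * pi / real (m + 1) < pi / 2"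
proof -
  show "0 < real j * pi / real (m + 1)"
    using assms by simp
  have "pi * real (2 * j) < pi * real (m + 1)"
    using assms by (intro mult_strict_left_mono) simp_all
  then show "real j * pi / real (m + 1) < pi / 2"
    by (simp add: field_simps)
qed

lemma pp_root_pos:
  assumes "1 \<le> j" "2 * j \<le> m"
  shows "0 < pp_root m j"
proof -
  have "0 < cos (real j * pi / real (m + 1))"
    using root_angle_bounds[OF assms] pi_gt_zero by (intro cos_gt_zero_pi) linarith+
  then show ?thesis
    by (simp add: pp_root_def)
qed

lemma pp_root_strict_mono:
  assumes "1 \<le> i" "i < j" "2 * j \<le> m"
  shows "pp_root m i < pp_root m j"
proof -
  define \<alpha> where "\<alpha> = real i * pi / real (m + 1)"
  define \<beta> where "\<beta> = real j * pi / real (m + 1)"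
  have \<alpha>: "0 < \<alpha>" and \<beta>: "\<beta> < pi / 2"
    using root_angle_bounds[of i m] root_angle_bounds[of j m] assms by (auto simp: \<alpha>_def \<beta>_def)
  have "\<alpha> < \<beta>"
    using assms by (simp add: \<alpha>_def \<beta>_def divide_strict_right_mono)
  then have "0 < cos \<beta>" "cos \<beta> < cos \<alpha>"
    using \<alpha> \<beta> by (auto intro!: cos_gt_zero_pi cos_monotone_0_pi)
  then have "(cos \<beta>)\<^sup>2 < (cos \<alpha>)\<^sup>2" "0 < (cos \<beta>)\<^sup>2"
    by (auto intro: power_strict_mono)
  then show ?thesis
    unfolding pp_root_def \<alpha>_def [symmetric] \<beta>_def [symmetric] by (simp add: divide_simps)
qed

lemma poly_pp_pp_root:
  assumes "1 \<le> j" "2 * j \<le> m"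
  shows "poly (map_poly of_int (pp m)) (pp_root m j) = 0"
proof -
  define t where "t = real j * pi / real (m + 1)"
  have "0 < t" "t < pi / 2"
    using root_angle_bounds[OF assms] by (simp_all add: t_def)
  then have "0 < cos t" "0 < sin t"
    by (auto intro!: cos_gt_zero_pi sin_gt_zero)
  moreover have "poly (map_poly of_int (pp m)) (pp_root m j) * (2 * cos t) ^ m * sin t
      = sin (real j * pi)"
    using poly_pp_cos[of t m] \<open>0 < cos t\<close> by (simp add: pp_root_def t_def [symmetric]) (simp add: t_def)
  ultimately show ?thesis
    by simp
qed

lemma poly_pp_first_pp_root_pos:
  assumes "2 \<le> m" "j < m"
  shows "0 < poly (map_poly of_int (pp j)) (pp_root m 1)"
proof -
  define t where "t = pi / real (m + 1)"
  have "0 < t" "t < pi / 2"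
    using root_angle_bounds[of 1 m] assms by (simp_all add: t_def)
  then have "0 < cos t" "0 < sin t"
    by (auto intro!: cos_gt_zero_pi sin_gt_zero)
  have "real (Suc j) * t < pi"
    using assms by (simp add: t_def field_simps)
  then have "0 < sin (real (Suc j) * t)"
    using \<open>0 < t\<close> by (intro sin_gt_zero) simp_all
  also have "sin (real (Suc j) * t) = poly (map_poly of_int (pp j)) (pp_root m 1) * ((2 * cos t) ^ j * sin t)"
    using poly_pp_cos[of t j] \<open>0 < cos t\<close> by (simp add: pp_root_def t_def mult.assoc)
  moreover have "0 < (2 * cos t) ^ j * sin t"
    using \<open>0 < cos t\<close> \<open>0 < sin t\<close> by simp
  ultimately show ?thesis
    by (metis zero_less_mult_pos2 mult.commute)
qed

lemma poly_pxi_first_pp_root_pos: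
  assumes "2 \<le> m" "\<forall>j\<in>set xs. j < m"
  shows "0 < poly (map_poly of_int (pxi xs)) (pp_root m 1)"
  using assms(2) poly_pp_first_pp_root_pos[OF assms(1)]
  by (induction xs) (auto simp: pxi_def map_poly_of_int_mult)

lemma poly_eq_prod_one_minus_inverse_roots:
  fixes p :: "'a::field poly" and x :: "'b \<Rightarrow> 'a"
  assumes "finite S" "inj_on x S" "\<And>j. j \<in> S \<Longrightarrow> poly p (x j) = 0"
    and "degree p \<le> card S" "poly p 0 = 1"
  shows "p = (\<Prod>j\<in>S. [:1, - 1 / x j:])"
proof (rule poly_eqI_degree)
  have x_nz: "x j \<noteq> 0" if "j \<in> S" for j
    using assms(3,5) that by force
  then have "0 \<notin> x ` S"
    by force
  then show "card (insert 0 (x ` S)) > degree p"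
    using assms(1,2,4) by (simp add: card_image)
  have "degree (\<Prod>j\<in>S. [:1, - 1 / x j:]) \<le> (\<Sum>j\<in>S. 1)"
    by (rule order.trans[OF degree_prod_sum_le[OF assms(1)]], rule sum_mono) auto
  then show "card (insert 0 (x ` S)) > degree (\<Prod>j\<in>S. [:1, - 1 / x j:])"
    using \<open>0 \<notin> x ` S\<close> assms(1,2) by (simp add: card_image)
  fix z assume "z \<in> insert 0 (x ` S)"
  then show "poly p z = poly (\<Prod>j\<in>S. [:1, - 1 / x j:]) z"
    using assms(1,3,5) x_nz by (auto simp: poly_prod prod_zero_iff)
qed

lemma pp_factorization:
  assumes "2 \<le> m"
  shows "map_poly of_int (pp m) = (\<Prod>j\<in>{1..m div 2}. [:1, - 1 / pp_root m j:])"
proof (rule poly_eq_prod_one_minus_inverse_roots)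
  show "inj_on (pp_root m) {1..m div 2}"
    by (rule strict_mono_on_imp_inj_on) (auto simp: strict_mono_on_def intro: pp_root_strict_mono)
  show "degree (map_poly of_int (pp m) :: real poly) \<le> card {1..m div 2}"
    using degree_pp[of m] map_poly_degree_leq[of "of_int :: int \<Rightarrow> real" "pp m"] by simp
  show "poly (map_poly of_int (pp m)) 0 = (1 :: real)"
    using poly_pp_0[of m] by (simp add: poly_0_coeff_0 coeff_map_poly)
qed (auto intro: poly_pp_pp_root)

definition fps_geometric :: "'a::comm_ring_1 \<Rightarrow> 'a fps" where
  "fps_geometric c = Abs_fps (\<lambda>n. c ^ n)"

lemma fps_geometric_inverse: "(1 - fps_const c * fps_X) * fps_geometric c = 1"
proof (rule fps_ext)
  fix n
  show "fps_nth ((1 - fps_const c * fps_X) * fps_geometric c) n = fps_nth 1 n"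
    by (cases n) (simp_all add: fps_geometric_def algebra_simps fps_X_mult_nth)
qed

lemma fps_geometric_conv:
  fixes c z :: real
  assumes "0 \<le> c" "0 \<le> z" "c * z < 1"
  shows "ereal z < fps_conv_radius (fps_geometric c)"
    and "eval_fps (fps_geometric c) z = 1 / (1 - c * z)"
proof -
  obtain z' where z': "z < z'" "c * z' < 1"
  proof (cases "c = 0")
    case True
    then show ?thesis using that[of "z + 1"] by simp
  next
    case False
    then show ?thesis using that[of "(z + 1 / c) / 2"] assms by (simp add: field_simps)
  qed
  have "summable (\<lambda>n. (c * z') ^ n)"
    using z' assms by (intro summable_geometric) auto
  then have "summable (\<lambda>n. fps_nth (fps_geometric c) n * z' ^ n)"
    by (simp add: fps_geometric_def power_mult_distrib)
  then have "norm z' \<le> fps_conv_radius (fps_geometric c)"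
    unfolding fps_conv_radius_def by (rule conv_radius_geI)
  moreover have "z < norm z'"
    using z' assms by simp
  then have "ereal z < ereal (norm z')"
    by simp
  ultimately show "ereal z < fps_conv_radius (fps_geometric c)"
    by (rule order_less_le_trans[rotated])
  have "eval_fps (fps_geometric c) z = (\<Sum>n. (c * z) ^ n)"
    by (simp add: eval_fps_def fps_geometric_def power_mult_distrib)
  also have "\<dots> = 1 / (1 - c * z)"
    using assms by (intro suminf_geometric) auto
  finally show "eval_fps (fps_geometric c) z = 1 / (1 - c * z)" .
qed

lemma fps_conv_radius_prod_gt:
  fixes f :: "'b \<Rightarrow> 'a::{banach, real_normed_div_algebra, comm_ring_1} fps"
  assumes "finite S" "\<And>j. j \<in> S \<Longrightarrow> ereal r < fps_conv_radius (f j)"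
  shows "ereal r < fps_conv_radius (\<Prod>j\<in>S. f j)"
  using assms
proof (induction S rule: finite_induct)
  case (insert a S)
  then have "ereal r < min (fps_conv_radius (f a)) (fps_conv_radius (\<Prod>j\<in>S. f j))"
    by simp
  also have "\<dots> \<le> fps_conv_radius (f a * (\<Prod>j\<in>S. f j))"
    by (rule fps_conv_radius_mult)
  finally show ?case
    using insert(1,2) by simp
qed simp

lemma eval_fps_prod:
  fixes f :: "'b \<Rightarrow> 'a::{banach, real_normed_div_algebra, comm_ring_1} fps"
  assumes "finite S" "\<And>j. j \<in> S \<Longrightarrow> norm z < fps_conv_radius (f j)"
  shows "eval_fps (\<Prod>j\<in>S. f j) z = (\<Prod>j\<in>S. eval_fps (f j) z)"
  using assms
proof (induction S rule: finite_induct)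
  case (insert a S)
  have "norm z < fps_conv_radius (\<Prod>j\<in>S. f j)"
    using insert by (intro fps_conv_radius_prod_gt) auto
  then show ?case
    using insert by (simp add: eval_fps_mult)
qed simp

lemma fps_eq_times_prod_fps_geometric_power:
  fixes f h :: "'a::comm_ring_1 fps"
  assumes "f * (\<Prod>j\<in>S. 1 - fps_const (c j) * fps_X) ^ k = h"
  shows "f = h * (\<Prod>j\<in>S. fps_geometric (c j)) ^ k"
proof -
  have "(\<Prod>j\<in>S. 1 - fps_const (c j) * fps_X) ^ k * (\<Prod>j\<in>S. fps_geometric (c j)) ^ k = 1"
    by (simp add: power_mult_distrib [symmetric] prod.distrib [symmetric] fps_geometric_inverse)
  then show ?thesis
    unfolding assms [symmetric] by (simp add: mult.assoc)
qed

lemma fps_of_poly_mult_prod_fps_geometric_power_conv: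
  fixes q :: "real poly" and c :: "'b \<Rightarrow> real" and k :: nat
  assumes "finite S" "0 \<le> \<rho>" "\<And>j. j \<in> S \<Longrightarrow> 0 \<le> c j \<and> c j * \<rho> < 1" "0 < poly q \<rho>"
  defines "g \<equiv> fps_of_poly q * (\<Prod>j\<in>S. fps_geometric (c j)) ^ k"
  shows "ereal \<rho> < fps_conv_radius g" and "0 < eval_fps g \<rho>"
proof -
  have conv: "ereal \<rho> < fps_conv_radius (fps_geometric (c j))"
    and eval: "eval_fps (fps_geometric (c j)) \<rho> = 1 / (1 - c j * \<rho>)" if "j \<in> S" for j
    using fps_geometric_conv[of "c j" \<rho>] assms(2,3) that by auto
  have prod_conv: "ereal \<rho> < fps_conv_radius (\<Prod>j\<in>S. fps_geometric (c j))"
    using assms(1) conv by (rule fps_conv_radius_prod_gt)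
  then have power_conv: "ereal \<rho> < fps_conv_radius ((\<Prod>j\<in>S. fps_geometric (c j)) ^ k)"
    using fps_conv_radius_power by (rule order_less_le_trans)
  then have "ereal \<rho> < min (fps_conv_radius (fps_of_poly q))
      (fps_conv_radius ((\<Prod>j\<in>S. fps_geometric (c j)) ^ k))"
    by simp
  also have "\<dots> \<le> fps_conv_radius g"
    unfolding g_def by (rule fps_conv_radius_mult)
  finally show "ereal \<rho> < fps_conv_radius g" .
  have "eval_fps (\<Prod>j\<in>S. fps_geometric (c j)) \<rho> = (\<Prod>j\<in>S. 1 / (1 - c j * \<rho>))"
    using assms(1,2) conv eval by (simp add: eval_fps_prod)
  also have "\<dots> > 0"
    using assms(3) by (intro prod_pos) simp
  finally show "0 < eval_fps g \<rho>"
    using assms(2,4) prod_conv power_conv by (simp add: g_def eval_fps_mult eval_fps_power)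
qed

lemma fps_nth_mult_fps_geometric_scaled:
  fixes f :: "'a::field fps"
  assumes "\<rho> \<noteq> 0"
  shows "fps_nth (f * fps_geometric (1 / \<rho>)) r * \<rho> ^ r = (\<Sum>i\<le>r. fps_nth f i * \<rho> ^ i)"
proof -
  have "fps_nth (f * fps_geometric (1 / \<rho>)) r * \<rho> ^ r
      = (\<Sum>i\<le>r. fps_nth f i * ((1 / \<rho>) ^ (r - i) * \<rho> ^ r))"
    by (simp add: fps_mult_nth fps_geometric_def sum_distrib_right atMost_atLeast0 mult.assoc)
  also have "\<dots> = (\<Sum>i\<le>r. fps_nth f i * \<rho> ^ i)"
  proof (rule sum.cong)
    fix i assume "i \<in> {..r}"
    then have "\<rho> ^ r = \<rho> ^ (r - i) * \<rho> ^ i"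
      by (simp add: power_add [symmetric])
    then show "fps_nth f i * ((1 / \<rho>) ^ (r - i) * \<rho> ^ r) = fps_nth f i * \<rho> ^ i"
      using assms by (simp add: power_one_over)
  qed simp
  finally show ?thesis .
qed

lemma sum_atMost_eventually_ge:
  fixes s :: "nat \<Rightarrow> real"
  assumes "0 < c" "eventually (\<lambda>r. c \<le> s r) sequentially"
  shows "eventually (\<lambda>r. c \<le> (\<Sum>i\<le>r. s i)) sequentially"
proof -
  obtain N where N: "\<And>i. N \<le> i \<Longrightarrow> c \<le> s i"
    using assms(2) by (auto simp: eventually_sequentially)
  define S0 where "S0 = (\<Sum>i<N. s i)"
  have lower: "S0 + (real r + 1 - real N) * c \<le> (\<Sum>i\<le>r. s i)" if "N \<le> r" for r
  proof -
    have split: "{..r} = {..<N} \<union> {N..r}" and disj: "{..<N} \<inter> {N..r} = {}"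
      using that by auto
    have "(real r + 1 - real N) * c = (\<Sum>i\<in>{N..r}. c)"
      using that by (simp add: of_nat_diff)
    also have "\<dots> \<le> (\<Sum>i\<in>{N..r}. s i)"
      by (rule sum_mono) (simp add: N)
    finally show ?thesis
      unfolding split S0_def by (simp add: sum.union_disjoint disj)
  qed
  have "eventually (\<lambda>r. real N + \<bar>S0\<bar> / c \<le> real r) sequentially"
    using filterlim_real_sequentially by (simp add: filterlim_at_top)
  then show ?thesis
    using eventually_ge_at_top[of N]
  proof eventually_elim
    case (elim r)
    then have "\<bar>S0\<bar> / c * c \<le> (real r - real N) * c"
      using assms(1) by (intro mult_right_mono) auto
    then have "\<bar>S0\<bar> \<le> (real r - real N) * c"
      using assms(1) by simp
    then show ?case
      using lower[OF elim(2)] by (simp add: algebra_simps)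
  qed
qed

text \<open>Scaled by \<open>\<rho>\<^sup>r\<close>, the coefficients of \<open>g\<close> times the \<open>k\<close>-th power of
  \<open>1 / (1 - x/\<rho>)\<close> are \<open>k\<close>-fold iterated partial sums of \<open>g\<^sub>i \<rho>\<^sup>i\<close>; the first
  ones converge to \<open>g(\<rho>) > 0\<close>, the later ones diverge to \<open>+\<infinity>\<close>.\<close>
lemma fps_nth_mult_fps_geometric_power_eventually_pos:
  fixes g :: "real fps"
  assumes "0 < \<rho>" "ereal \<rho> < fps_conv_radius g" "0 < eval_fps g \<rho>" "1 \<le> k"
  shows "eventually (\<lambda>r. 0 < fps_nth (g * fps_geometric (1 / \<rho>) ^ k) r) sequentially"
proof -
  define s where "s n r = fps_nth (g * fps_geometric (1 / \<rho>) ^ n) r * \<rho> ^ r" for n r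
  have s_Suc: "s (Suc n) r = (\<Sum>i\<le>r. s n i)" for n r
    unfolding s_def power_Suc2 mult.assoc [symmetric]
    by (rule fps_nth_mult_fps_geometric_scaled) (use assms(1) in simp)
  have "\<exists>c>0. eventually (\<lambda>r. c \<le> s (Suc n) r) sequentially" for n
  proof (induction n)
    case 0
    have "(\<lambda>i. fps_nth g i * \<rho> ^ i) sums eval_fps g \<rho>"
      using sums_eval_fps[of \<rho> g] assms(1,2) by simp
    then have "(\<lambda>r. \<Sum>i<Suc r. fps_nth g i * \<rho> ^ i) \<longlonglongrightarrow> eval_fps g \<rho>"
      unfolding sums_def by (rule LIMSEQ_Suc)
    moreover have "s (Suc 0) = (\<lambda>r. \<Sum>i<Suc r. fps_nth g i * \<rho> ^ i)"
      unfolding fun_eq_iff s_Suc by (simp add: s_def lessThan_Suc_atMost)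
    ultimately have "s (Suc 0) \<longlonglongrightarrow> eval_fps g \<rho>"
      by simp
    then have "eventually (\<lambda>r. eval_fps g \<rho> / 2 < s (Suc 0) r) sequentially"
      using assms(3) by (intro order_tendstoD(1)) auto
    then show ?case
      using assms(3) by (intro exI[of _ "eval_fps g \<rho> / 2"]) (auto elim: eventually_mono)
  next
    case (Suc n)
    then show ?case
      using sum_atMost_eventually_ge[of _ "s (Suc n)"] by (auto simp: s_Suc)
  qed
  moreover obtain n where "k = Suc n"
    using assms(4) by (cases k) auto
  ultimately obtain c where "0 < c" "eventually (\<lambda>r. c \<le> s k r) sequentially"
    by blast
  then have "eventually (\<lambda>r. 0 < s k r) sequentially"
    by (auto elim: eventually_mono)
  then show ?thesis
    by (rule eventually_mono) (metis s_def zero_less_mult_pos2 zero_less_power assms(1))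
qed

definition fps_of_int_poly :: "int poly \<Rightarrow> 'a::comm_ring_1 fps" where
  "fps_of_int_poly p = fps_of_poly (map_poly of_int p)"

lemma fps_of_int_poly_mult: "fps_of_int_poly (p * q) = fps_of_int_poly p * fps_of_int_poly q"
  by (simp add: fps_of_int_poly_def map_poly_of_int_mult fps_of_poly_mult)

lemma fps_of_int_poly_power: "fps_of_int_poly (p ^ n) = fps_of_int_poly p ^ n"
  by (simp add: fps_of_int_poly_def map_poly_of_int_power fps_of_poly_power)

lemma fps_nth_fps_of_int_poly_0: "fps_nth (fps_of_int_poly p) 0 = of_int (poly p 0)"
  by (simp add: fps_of_int_poly_def coeff_map_poly poly_0_coeff_0)

lemma fps_of_int_poly_pp_nonzero: "(fps_of_int_poly (pp m) :: 'a::{comm_ring_1, ring_char_0} fps) \<noteq> 0"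
  by (metis fps_nth_fps_of_int_poly_0 fps_zero_nth of_int_1 one_neq_zero poly_pp_0)

definition real_fps_of_rat :: "rat fps \<Rightarrow> real fps" where
  "real_fps_of_rat f = Abs_fps (\<lambda>n. of_rat (fps_nth f n))"

lemma real_fps_of_rat_mult: "real_fps_of_rat (f * g) = real_fps_of_rat f * real_fps_of_rat g"
  by (rule fps_ext) (simp add: real_fps_of_rat_def fps_mult_nth of_rat_sum of_rat_mult)

lemma real_fps_of_rat_fps_of_int_poly: "real_fps_of_rat (fps_of_int_poly p) = fps_of_int_poly p"
  by (rule fps_ext) (simp add: real_fps_of_rat_def fps_of_int_poly_def coeff_map_poly)

lemma pxi_eq_pp_power_mult_pxi_filter:
  "pxi xs = pp m ^ length (filter (\<lambda>i. i = m) xs) * pxi (filter (\<lambda>i. i \<noteq> m) xs)"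
  by (induction xs) (auto simp: pxi_def algebra_simps)

lemma Fser_mult_denominator:
  "Fser xi m mu * fps_of_int_poly (pp m) ^ (mu div m + 1)
     = fps_of_int_poly (pp (m - mu mod m - 1) * pxi xi)"
proof -
  have "fps_nth (fps_of_int_poly (pp m ^ (mu div m + 1)) :: rat fps) 0 \<noteq> 0"
    by (simp add: fps_nth_fps_of_int_poly_0 poly_power)
  then show ?thesis
    unfolding Fser_def fps_of_int_poly_def [symmetric] fps_of_int_poly_power [symmetric]
    by (simp add: fps_divide_unit mult.assoc inverse_mult_eq_1)
qed

text \<open>At most one of the two truncated differences \<open>k - t\<close>, \<open>t - k\<close> is nonzero: after
  cancellation \<open>p\<^sub>m\<close> survives either in the denominator or in the numerator.\<close>
lemma Fser_reduced:
  fixes xi :: "nat list" and m mu :: nat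
  defines "t \<equiv> length (filter (\<lambda>i. i = m) xi)" and "k \<equiv> mu div m + 1"
  shows "Fser xi m mu * fps_of_int_poly (pp m) ^ (k - t)
           = fps_of_int_poly (pp (m - mu mod m - 1) * pxi (filter (\<lambda>i. i \<noteq> m) xi) * pp m ^ (t - k))"
proof -
  define P :: "rat fps" where "P = fps_of_int_poly (pp m)"
  define N where "N = pp (m - mu mod m - 1) * pxi (filter (\<lambda>i. i \<noteq> m) xi)"
  have k: "k - t + min k t = k" and t: "t - k + min k t = t"
    by auto
  have "Fser xi m mu * P ^ (k - t) * P ^ min k t = Fser xi m mu * P ^ k"
    by (simp only: mult.assoc power_add [symmetric] k)
  also have "\<dots> = fps_of_int_poly (N * pp m ^ t)"
    unfolding P_def k_def t_def N_def Fser_mult_denominator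
    by (subst pxi_eq_pp_power_mult_pxi_filter [of _ m]) (simp only: ac_simps)
  also have "\<dots> = fps_of_int_poly (N * pp m ^ (t - k)) * P ^ min k t"
    by (simp only: P_def fps_of_int_poly_mult fps_of_int_poly_power mult.assoc power_add [symmetric] t)
  finally show ?thesis
    using fps_of_int_poly_pp_nonzero [of m, where 'a = rat] by (simp add: P_def N_def)
qed

lemma real_fps_of_rat_Fser_reduced:
  assumes "length (filter (\<lambda>i. i = m) xi) \<le> mu div m"
  shows "real_fps_of_rat (Fser xi m mu)
             * fps_of_int_poly (pp m) ^ (mu div m + 1 - length (filter (\<lambda>i. i = m) xi))
           = fps_of_int_poly (pp (m - mu mod m - 1) * pxi (filter (\<lambda>i. i \<noteq> m) xi))"
proof -
  let ?k = "mu div m + 1 - length (filter (\<lambda>i. i = m) xi)"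
  have "real_fps_of_rat (Fser xi m mu * fps_of_int_poly (pp m ^ ?k))
      = real_fps_of_rat (fps_of_int_poly (pp (m - mu mod m - 1) * pxi (filter (\<lambda>i. i \<noteq> m) xi)))"
    using Fser_reduced[of xi m mu] assms by (simp add: fps_of_int_poly_power)
  then show ?thesis
    by (simp only: real_fps_of_rat_mult real_fps_of_rat_fps_of_int_poly) (simp only: fps_of_int_poly_power)
qed

lemma fps_of_int_poly_pp_factorization:
  assumes "2 \<le> m"
  shows "(fps_of_int_poly (pp m) :: real fps)
           = (\<Prod>j\<in>{1..m div 2}. 1 - fps_const (1 / pp_root m j) * fps_X)"
  unfolding fps_of_int_poly_def pp_factorization[OF assms] fps_of_poly_prod
  by (intro prod.cong refl fps_ext) (simp add: coeff_pCons split: nat.split)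

lemma Fser_eventually_pos:
  assumes "2 \<le> m" "\<forall>i\<in>set xi. 0 < i \<and> i \<le> m" "length (filter (\<lambda>i. i = m) xi) \<le> mu div m"
  shows "eventually (\<lambda>r. 0 < fps_nth (Fser xi m mu) r) sequentially"
proof -
  define k where "k = mu div m + 1 - length (filter (\<lambda>i. i = m) xi)"
  define N where "N = pp (m - mu mod m - 1) * pxi (filter (\<lambda>i. i \<noteq> m) xi)"
  define \<rho> where "\<rho> = pp_root m 1"
  define c where "c j = 1 / pp_root m j" for j
  define g :: "real fps"
    where "g = fps_of_poly (map_poly of_int N) * (\<Prod>j\<in>{2..m div 2}. fps_geometric (c j)) ^ k"
  have "1 \<le> k"
    using assms(3) by (simp add: k_def)
  have "0 < \<rho>"
    using pp_root_pos[of 1 m] assms(1) by (simp add: \<rho>_def)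
  have "real_fps_of_rat (Fser xi m mu) * (\<Prod>j\<in>{1..m div 2}. 1 - fps_const (c j) * fps_X) ^ k
      = fps_of_int_poly N"
    using real_fps_of_rat_Fser_reduced[OF assms(3)]
    by (simp only: k_def N_def c_def fps_of_int_poly_pp_factorization[OF assms(1)])
  then have "real_fps_of_rat (Fser xi m mu)
      = fps_of_int_poly N * (\<Prod>j\<in>{1..m div 2}. fps_geometric (c j)) ^ k"
    by (rule fps_eq_times_prod_fps_geometric_power)
  also have "{1..m div 2} = insert 1 {2..m div 2}"
    using assms(1) by auto
  finally have F: "real_fps_of_rat (Fser xi m mu) = g * fps_geometric (1 / \<rho>) ^ k"
    by (simp add: g_def c_def \<rho>_def fps_of_int_poly_def power_mult_distrib ac_simps)
  have "0 \<le> c j \<and> c j * \<rho> < 1" if "j \<in> {2..m div 2}" for j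
  proof -
    have "2 \<le> j" "2 * j \<le> m"
      using that by auto
    then have "0 < pp_root m j" "\<rho> < pp_root m j"
      using pp_root_pos[of j m] pp_root_strict_mono[of 1 j m] by (simp_all add: \<rho>_def)
    then show ?thesis
      by (simp add: c_def field_simps)
  qed
  moreover have "0 < poly (map_poly of_int N) \<rho>"
    using poly_pxi_first_pp_root_pos[OF assms(1), of "(m - mu mod m - 1) # filter (\<lambda>i. i \<noteq> m) xi"]
      assms(1,2) by (force simp: N_def \<rho>_def pxi_def)
  ultimately have "ereal \<rho> < fps_conv_radius g" "0 < eval_fps g \<rho>"
    using fps_of_poly_mult_prod_fps_geometric_power_conv[of "{2..m div 2}" \<rho> c] \<open>0 < \<rho>\<close>
    by (simp_all add: g_def)
  then have "eventually (\<lambda>r. 0 < fps_nth (real_fps_of_rat (Fser xi m mu)) r) sequentially"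
    unfolding F by (rule fps_nth_mult_fps_geometric_power_eventually_pos[OF \<open>0 < \<rho>\<close> _ _ \<open>1 \<le> k\<close>])
  then show ?thesis
    by (simp add: real_fps_of_rat_def)
qed

lemma Fser_1_eq_1:
  assumes "\<forall>i\<in>set xi. 0 < i \<and> i \<le> 1"
  shows "Fser xi 1 mu = 1"
proof -
  have "\<forall>i\<in>set xi. i = 1"
    using assms by force
  then have "pxi xi = 1"
    by (induction xi) (auto simp: pxi_def)
  then show ?thesis
    by (simp add: Fser_def)
qed

lemma Fser_polynomial:
  assumes "mu div m + 1 \<le> length (filter (\<lambda>i. i = m) xi)"
  shows "Fser xi m mu = fps_of_poly (map_poly of_int
           (pp (m - mu mod m - 1) * pxi (filter (\<lambda>i. i \<noteq> m) xi)
             * pp m ^ (length (filter (\<lambda>i. i = m) xi) - (mu div m + 1))))"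
  using Fser_reduced[of xi m mu] assms by (simp add: fps_of_int_poly_def)

lemma eventually_fps_nth_fps_of_poly_eq_0: "eventually (\<lambda>r. fps_nth (fps_of_poly p) r = 0) sequentially"
  unfolding eventually_sequentially by (auto intro!: exI[of _ "Suc (degree p)"] coeff_eq_0)

theorem theorem1p1:
  fixes m mu :: nat and xi :: "nat list"
  assumes "m \<ge> 1"
    and "sorted_wrt (\<ge>) xi"
    and "\<forall>i\<in>set xi. 0 < i \<and> i \<le> m"
  shows "(m = 1 \<longrightarrow> Fser xi 1 mu = 1)
       \<and> (m \<ge> 2 \<longrightarrow>
            (length (filter (\<lambda>i. i = m) xi) \<ge> mu div m + 1 \<longrightarrow>
               (\<exists>q :: rat poly. Fser xi m mu = fps_of_poly q)
               \<and> (\<forall>\<^sub>F r in sequentially. fps_nth (Fser xi m mu) r = 0))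
          \<and> (length (filter (\<lambda>i. i = m) xi) \<le> mu div m \<longrightarrow>
               (\<forall>\<^sub>F r in sequentially. fps_nth (Fser xi m mu) r > 0)))"
proof (intro conjI impI)
  show "Fser xi 1 mu = 1" if "m = 1"
    using Fser_1_eq_1 assms(3) that by blast
  assume "2 \<le> m"
  show "eventually (\<lambda>r. 0 < fps_nth (Fser xi m mu) r) sequentially"
    if "length (filter (\<lambda>i. i = m) xi) \<le> mu div m"
    using Fser_eventually_pos[OF \<open>2 \<le> m\<close> assms(3) that] .
  assume "mu div m + 1 \<le> length (filter (\<lambda>i. i = m) xi)"
  note polynomial = Fser_polynomial[OF this]
  then show "\<exists>q :: rat poly. Fser xi m mu = fps_of_poly q"
    by blast
  show "eventually (\<lambda>r. fps_nth (Fser xi m mu) r = 0) sequentially"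
    unfolding polynomial by (rule eventually_fps_nth_fps_of_poly_eq_0)
qed

end
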